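(* Under the standing assumptions, for $0\le i\le d$ the following holds on $V$: $$E^*_0\,\tau_i(A)\,E^*_0=\frac{\zeta_i\,E^*_0}{(\theta^*_0-\theta^*_1)(\theta^*_0-\theta^*_2)\cdots(\theta^*_0-\theta^*_i)}.$$
   Context: Let $\mathbb F$ be an algebraically closed field, $d\ge0$, and $q,a,b,c,a^*,b^*,c^*\in\mathbb F$ with $q,b,c,b^*,c^*$ nonzero and $q^2\ne\pm1$. Put $\theta_i=a+bq^{2i-d}+cq^{d-2i}$ and $\theta^*_i=a^*+b^*q^{2i-d}+c^*q^{d-2i}$ ($0\le i\le d$), and assume $\theta_0,\dots,\theta_d$ are mutually distinct and $\theta^*_0,\dots,\theta^*_d$ are mutually distinct (this forces $q^{2i}\ne1$ for $1\le i\le d$). For an indeterminate $\lambda$, $\tau_i=(\lambda-\theta_0)(\lambda-\theta_1)\cdots(\lambda-\theta_{i-1})$ ($\tau_0=1$). $U_q(\widehat{\mathfrak{sl}}_2)$ is the associative unital $\mathbb F$-algebra with generators $e_i^{\pm},K_i^{\pm1}$ ($i\in\{0,1\}$) and relations $K_iK_i^{-1}=K_i^{-1}K_i=1$, $K_0K_1=K_1K_0$, $K_ie_i^{\pm}K_i^{-1}=q^{\pm2}e_i^{\pm}$, $K_ie_j^{\pm}K_i^{-1}=q^{\mp2}e_j^{\pm}$ ($i\ne j$), $e_i^+e_i^--e_i^-e_i^+=(K_i-K_i^{-1})/(q-q^{-1})$, $e_0^{\pm}e_1^{\mp}=e_1^{\mp}e_0^{\pm}$, and the $q$-Serre relations $(e_i^\pm)^3e_j^\pm-[3]_q(e_i^\pm)^2e_j^\pm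 e_i^\pm+[3]_qe_i^\pm e_j^\pm(e_i^\pm)^2-e_j^\pm(e_i^\pm)^3=0$ ($i\ne j$), where $[3]_q=q^2+1+q^{-2}$. Tensor products of modules are formed via $e_i^+(v\otimes w)=e_i^+v\otimes K_iw+v\otimes e_i^+w$, $e_i^-(v\otimes w)=e_i^-v\otimes w+K_i^{-1}v\otimes e_i^-w$, $K_i(v\otimes w)=K_iv\otimes K_iw$. For nonzero $\alpha\in\mathbb F$, $V(\alpha)$ is the module with basis $x,y$ and $K_1x=qx$, $K_1y=q^{-1}y$, $e_1^-x=y$, $e_1^-y=0$, $e_1^+x=0$, $e_1^+y=x$, $K_0x=q^{-1}x$, $K_0y=qy$, $e_0^-x=0$, $e_0^-y=q\alpha^{-1}x$, $e_0^+x=q^{-1}\alpha y$, $e_0^+y=0$. $V=V(\alpha_1)\otimes\cdots\otimes V(\alpha_d)$ with nonzero $\alpha_i\in\mathbb F$ (for $d=0$, the trivial module where each $e_i^\pm$ acts as $0$ and each $K_i^{\pm1}$ as $1$). $U_0$ is the $1$-dimensional span of $x\otimes\cdots\otimes x$. Fix $u,v,u^*,v^*\in\mathbb F$ with $uv^*=-bb^*q^{-1}(q-q^{-1})^2$, $vu^*=-cc^*q^{-1}(q-q^{-1})^2$; set $R=ue_0^++ve_1^-K_1$, $L=u^*e_1^++v^*e_0^-K_0$, $A=a1+bK_0+cK_1+R$, $A^*=a^*1+b^*K_0+c^*K_1+L$, and $E^*_0=\prod_{1\le j\le d}(A^*-\theta^*_j1)/(\theta^*_0-\theta^*_j)$ in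 $U_q(\widehat{\mathfrak{sl}}_2)$. For $0\le i\le d$, $\zeta_i$ denotes the scalar by which $L^iR^i$ acts on $U_0$ (the split sequence of $V$). *)

theory Defs
  imports "HOL-Computational_Algebra.Polynomial"
begin

text \<open>Basis of V: bool lists of length d; True stands for x, False for y
  (position k of the list is tensor factor k+1). An operator is given by its
  matrix M s t = coefficient of basis vector s in the image of basis vector t.\<close>

type_synonym 'a op = "bool list \<Rightarrow> bool list \<Rightarrow> 'a"
type_synonym 'a site = "bool \<Rightarrow> bool \<Rightarrow> 'a"

definition basisV :: "nat \<Rightarrow> bool list set" where
  "basisV d = {s. length s = d}"

definition op_mul :: "nat \<Rightarrow> 'a::comm_ring_1 op \<Rightarrow> 'a op \<Rightarrow> 'a op" where
  "op_mul d M N = (\<lambda>s t. \<Sum>u\<in>basisV d. M s u * N u t)"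

definition op_id :: "'a::comm_ring_1 op" where
  "op_id = (\<lambda>s t. if s = t then 1 else 0)"

definition op_add :: "'a::comm_ring_1 op \<Rightarrow> 'a op \<Rightarrow> 'a op" where
  "op_add M N = (\<lambda>s t. M s t + N s t)"

definition op_smult :: "'a::comm_ring_1 \<Rightarrow> 'a op \<Rightarrow> 'a op" where
  "op_smult c M = (\<lambda>s t. c * M s t)"

fun op_pow :: "nat \<Rightarrow> 'a::comm_ring_1 op \<Rightarrow> nat \<Rightarrow> 'a op" where
  "op_pow d M 0 = op_id"
| "op_pow d M (Suc n) = op_mul d M (op_pow d M n)"

definition op_prod :: "nat \<Rightarrow> 'a::comm_ring_1 op list \<Rightarrow> 'a op" where
  "op_prod d Ms = foldr (op_mul d) Ms op_id"

definition op_eq :: "nat \<Rightarrow> 'a op \<Rightarrow> 'a op \<Rightarrow> bool" where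
  "op_eq d M N = (\<forall>s\<in>basisV d. \<forall>t\<in>basisV d. M s t = N s t)"

definition tens :: "nat \<Rightarrow> (nat \<Rightarrow> 'a::comm_ring_1 site) \<Rightarrow> 'a op" where
  "tens d f = (\<lambda>s t. \<Prod>k<d. f k (s ! k) (t ! k))"

definition site_id :: "'a::field site" where
  "site_id = (\<lambda>r c. if r = c then 1 else 0)"
definition site_K1 :: "'a::field \<Rightarrow> 'a site" where
  "site_K1 q = (\<lambda>r c. if r = c then (if c then q else inverse q) else 0)"
definition site_K1inv :: "'a::field \<Rightarrow> 'a site" where
  "site_K1inv q = (\<lambda>r c. if r = c then (if c then inverse q else q) else 0)"
definition site_K0 :: "'a::field \<Rightarrow> 'a site" where
  "site_K0 q = (\<lambda>r c. if r = c then (if c then inverse q else q) else 0)"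
definition site_K0inv :: "'a::field \<Rightarrow> 'a site" where
  "site_K0inv q = (\<lambda>r c. if r = c then (if c then q else inverse q) else 0)"
text \<open>e1^- x = y, e1^- y = 0\<close>
definition site_e1m :: "'a::field site" where
  "site_e1m = (\<lambda>r c. if c \<and> \<not> r then 1 else 0)"
text \<open>e1^+ y = x, e1^+ x = 0\<close>
definition site_e1p :: "'a::field site" where
  "site_e1p = (\<lambda>r c. if \<not> c \<and> r then 1 else 0)"
text \<open>e0^- y = q alpha^-1 x, e0^- x = 0\<close>
definition site_e0m :: "'a::field \<Rightarrow> 'a \<Rightarrow> 'a site" where
  "site_e0m q \<alpha> = (\<lambda>r c. if \<not> c \<and> r then q * inverse \<alpha> else 0)"
text \<open>e0^+ x = q^-1 alpha y, e0^+ y = 0\<close>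
definition site_e0p :: "'a::field \<Rightarrow> 'a \<Rightarrow> 'a site" where
  "site_e0p q \<alpha> = (\<lambda>r c. if c \<and> \<not> r then inverse q * \<alpha> else 0)"

text \<open>alpha k (k < d) is the parameter of tensor factor k+1.
  e^+(v w) = e^+ v (K w) + v (e^+ w);  e^-(v w) = (e^- v) w + (K^-1 v)(e^- w).\<close>

definition V_K0 :: "nat \<Rightarrow> 'a::field \<Rightarrow> 'a op" where
  "V_K0 d q = tens d (\<lambda>j. site_K0 q)"
definition V_K1 :: "nat \<Rightarrow> 'a::field \<Rightarrow> 'a op" where
  "V_K1 d q = tens d (\<lambda>j. site_K1 q)"

definition V_e0p :: "nat \<Rightarrow> 'a::field \<Rightarrow> (nat \<Rightarrow> 'a) \<Rightarrow> 'a op" where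
  "V_e0p d q \<alpha> = (\<lambda>s t. \<Sum>k<d. tens d (\<lambda>j. if j < k then site_id
       else if j = k then site_e0p q (\<alpha> k) else site_K0 q) s t)"
definition V_e1p :: "nat \<Rightarrow> 'a::field \<Rightarrow> 'a op" where
  "V_e1p d q = (\<lambda>s t. \<Sum>k<d. tens d (\<lambda>j. if j < k then site_id
       else if j = k then site_e1p else site_K1 q) s t)"
definition V_e0m :: "nat \<Rightarrow> 'a::field \<Rightarrow> (nat \<Rightarrow> 'a) \<Rightarrow> 'a op" where
  "V_e0m d q \<alpha> = (\<lambda>s t. \<Sum>k<d. tens d (\<lambda>j. if j < k then site_K0inv q
       else if j = k then site_e0m q (\<alpha> k) else site_id) s t)"
definition V_e1m :: "nat \<Rightarrow> 'a::field \<Rightarrow> 'a op" where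
  "V_e1m d q = (\<lambda>s t. \<Sum>k<d. tens d (\<lambda>j. if j < k then site_K1inv q
       else if j = k then site_e1m else site_id) s t)"

definition R_op :: "nat \<Rightarrow> 'a::field \<Rightarrow> (nat \<Rightarrow> 'a) \<Rightarrow> 'a \<Rightarrow> 'a \<Rightarrow> 'a op" where
  "R_op d q \<alpha> u v = op_add (op_smult u (V_e0p d q \<alpha>)) (op_smult v (op_mul d (V_e1m d q) (V_K1 d q)))"

definition L_op :: "nat \<Rightarrow> 'a::field \<Rightarrow> (nat \<Rightarrow> 'a) \<Rightarrow> 'a \<Rightarrow> 'a \<Rightarrow> 'a op" where
  "L_op d q \<alpha> us vs = op_add (op_smult us (V_e1p d q)) (op_smult vs (op_mul d (V_e0m d q \<alpha>) (V_K0 d q)))"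

definition A_op :: "nat \<Rightarrow> 'a::field \<Rightarrow> (nat \<Rightarrow> 'a) \<Rightarrow> 'a \<Rightarrow> 'a \<Rightarrow> 'a \<Rightarrow> 'a \<Rightarrow> 'a \<Rightarrow> 'a op" where
  "A_op d q \<alpha> a b c u v = op_add (op_smult a op_id) (op_add (op_smult b (V_K0 d q))
      (op_add (op_smult c (V_K1 d q)) (R_op d q \<alpha> u v)))"

definition As_op :: "nat \<Rightarrow> 'a::field \<Rightarrow> (nat \<Rightarrow> 'a) \<Rightarrow> 'a \<Rightarrow> 'a \<Rightarrow> 'a \<Rightarrow> 'a \<Rightarrow> 'a \<Rightarrow> 'a op" where
  "As_op d q \<alpha> as bs cs us vs = op_add (op_smult as op_id) (op_add (op_smult bs (V_K0 d q))
      (op_add (op_smult cs (V_K1 d q)) (L_op d q \<alpha> us vs)))"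

definition theta :: "'a::field \<Rightarrow> 'a \<Rightarrow> 'a \<Rightarrow> 'a \<Rightarrow> nat \<Rightarrow> nat \<Rightarrow> 'a" where
  "theta a b c q d i = a + b * q powi (2 * int i - int d) + c * q powi (int d - 2 * int i)"

definition E0s_op :: "nat \<Rightarrow> 'a::field \<Rightarrow> (nat \<Rightarrow> 'a) \<Rightarrow> 'a \<Rightarrow> 'a \<Rightarrow> 'a \<Rightarrow> 'a \<Rightarrow> 'a \<Rightarrow> 'a op" where
  "E0s_op d q \<alpha> as bs cs us vs = op_prod d (map (\<lambda>j.
      op_smult (inverse (theta as bs cs q d 0 - theta as bs cs q d j))
        (op_add (As_op d q \<alpha> as bs cs us vs) (op_smult (- theta as bs cs q d j) op_id))) [1..<d+1])"

definition tau_op :: "nat \<Rightarrow> (nat \<Rightarrow> 'a::field) \<Rightarrow> 'a op \<Rightarrow> nat \<Rightarrow> 'a op" where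
  "tau_op d th M i = op_prod d (map (\<lambda>h. op_add M (op_smult (- th h) op_id)) [0..<i])"

definition x0 :: "nat \<Rightarrow> bool list" where
  "x0 d = replicate d True"

definition zeta :: "nat \<Rightarrow> 'a::field \<Rightarrow> (nat \<Rightarrow> 'a) \<Rightarrow> 'a \<Rightarrow> 'a \<Rightarrow> 'a \<Rightarrow> 'a \<Rightarrow> nat \<Rightarrow> 'a" where
  "zeta d q \<alpha> u v us vs i = (THE z. \<forall>s\<in>basisV d.
      op_mul d (op_pow d (L_op d q \<alpha> us vs) i) (op_pow d (R_op d q \<alpha> u v) i) s (x0 d)
        = (if s = x0 d then z else 0))"

end

theory Submission
  imports Defs
begin

(* Grade V by weight: a basis vector has weight m if it contains m tensor factors y.
   K0 and K1 act on the weight-m space as the scalars q^(2m-d) and q^(d-2m), the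
   operator R raises the weight by one and L lowers it by one.  Hence on a vector
   of weight m, A acts as theta_m + R and A* acts as theta*_m + L.  Consequently
   (1) tau_i(A) maps x..x (weight 0) to R^i(x..x), since the factor A - theta_h sends
       R^h(x..x) to R^(h+1)(x..x);
   (2) E*_0 maps a vector w of weight m <= d to L^m w divided by
       (theta*_0 - theta*_1)...(theta*_0 - theta*_m): the factors j <= m lower the
       weight down to 0, and the factors j > m then act as the identity.
   In particular E*_0 maps V into U_0, and E*_0 tau_i(A) acts on x..x as
   zeta_i / ((theta*_0 - theta*_1)...(theta*_0 - theta*_i)); comparing matrix entries
   gives the theorem.  Of the standing assumptions only q <> 0, the distinctness of
   theta*_0, ..., theta*_d and i <= d are needed. *)

text \<open>A vector of V is a coefficient function on bool lists; only the entries at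
  basis vectors of V are meaningful, and the action of an operator discards the rest.\<close>

type_synonym 'a vec = "bool list \<Rightarrow> 'a"

lemma finite_basisV [simp]: "finite (basisV d)"
proof -
  have "basisV d = {xs. set xs \<subseteq> (UNIV :: bool set) \<and> length xs = d}"
    by (auto simp: basisV_def)
  then show ?thesis using finite_lists_length_eq[of "UNIV :: bool set" d] by simp
qed

definition restrict_V :: "nat \<Rightarrow> 'a::comm_ring_1 vec \<Rightarrow> 'a vec" where
  "restrict_V d w = (\<lambda>s. if s \<in> basisV d then w s else 0)"

definition op_apply :: "nat \<Rightarrow> 'a::comm_ring_1 op \<Rightarrow> 'a vec \<Rightarrow> 'a vec" where
  "op_apply d M w = (\<lambda>s. if s \<in> basisV d then (\<Sum>t\<in>basisV d. M s t * w t) else 0)"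

definition unit_vec :: "bool list \<Rightarrow> 'a::comm_ring_1 vec" where
  "unit_vec t = (\<lambda>s. if s = t then 1 else 0)"

lemma op_apply_mul: "op_apply d (op_mul d M N) w = op_apply d M (op_apply d N w)"
proof (rule ext)
  fix s
  have "(\<Sum>t\<in>basisV d. (\<Sum>u\<in>basisV d. M s u * N u t) * w t)
      = (\<Sum>t\<in>basisV d. \<Sum>u\<in>basisV d. M s u * N u t * w t)"
    by (simp add: sum_distrib_right)
  also have "\<dots> = (\<Sum>u\<in>basisV d. \<Sum>t\<in>basisV d. M s u * N u t * w t)"
    by (rule sum.swap)
  also have "\<dots> = (\<Sum>u\<in>basisV d. M s u * op_apply d N w u)"
    by (auto simp: op_apply_def sum_distrib_left mult.assoc intro!: sum.cong)
  finally show "op_apply d (op_mul d M N) w s = op_apply d M (op_apply d N w) s"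
    by (simp add: op_apply_def op_mul_def)
qed

lemma op_apply_id: "op_apply d op_id w = restrict_V d w"
  by (auto simp: op_apply_def restrict_V_def op_id_def if_distrib[of "\<lambda>x. x * _"] cong: if_cong)

lemma op_apply_add: "op_apply d (op_add M N) w = (\<lambda>s. op_apply d M w s + op_apply d N w s)"
  by (auto simp: op_apply_def op_add_def distrib_right sum.distrib)

lemma op_apply_smult: "op_apply d (op_smult c M) w = (\<lambda>s. c * op_apply d M w s)"
  by (auto simp: op_apply_def op_smult_def sum_distrib_left mult.assoc)

lemma op_apply_scale: "op_apply d M (\<lambda>s. c * w s) = (\<lambda>s. c * op_apply d M w s)"
  by (auto simp: op_apply_def sum_distrib_left algebra_simps)

lemma op_apply_pow_scale: "(op_apply d M ^^ n) (\<lambda>s. c * w s) = (\<lambda>s. c * (op_apply d M ^^ n) w s)"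
  by (induction n) (auto simp: op_apply_scale)

lemma op_apply_prod: "op_apply d (op_prod d Ms) w = foldr (\<circ>) (map (op_apply d) Ms) id (restrict_V d w)"
  by (induction Ms arbitrary: w) (auto simp: op_prod_def op_apply_id op_apply_mul)

lemma op_apply_pow: "op_apply d (op_pow d M n) w = (op_apply d M ^^ n) (restrict_V d w)"
  by (induction n arbitrary: w) (auto simp: op_apply_id op_apply_mul)

lemma op_entry: "s \<in> basisV d \<Longrightarrow> t \<in> basisV d \<Longrightarrow> M s t = op_apply d M (unit_vec t) s"
  by (simp add: op_apply_def unit_vec_def if_distrib cong: if_cong)

text \<open>The action of a factor c (M - th) of a polynomial in M.  Such factors commute,
  which lets us reorder the products defining tau_i(A) and E*_0.\<close>
definition factor :: "nat \<Rightarrow> 'a::comm_ring_1 op \<Rightarrow> 'a \<Rightarrow> 'a \<Rightarrow> 'a vec \<Rightarrow> 'a vec" where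
  "factor d M c th w = (\<lambda>s. c * (op_apply d M w s - th * restrict_V d w s))"

lemma op_apply_factor: "op_apply d (op_smult c (op_add M (op_smult (-th) op_id))) = factor d M c th"
  by (rule ext) (simp add: op_apply_smult op_apply_add op_apply_id factor_def algebra_simps)

lemma op_apply_factor1: "op_apply d (op_add M (op_smult (-th) op_id)) = factor d M 1 th"
  by (rule ext) (simp add: op_apply_add op_apply_smult op_apply_id factor_def algebra_simps)

lemma factor_commute: "factor d M c th \<circ> factor d M c' th' = factor d M c' th' \<circ> factor d M c th"
  by (auto simp: fun_eq_iff factor_def op_apply_def restrict_V_def sum_distrib_left
      sum_subtractf algebra_simps)

lemma comp_list_append: "foldr (\<circ>) (xs @ ys) id = foldr (\<circ>) xs id \<circ> foldr (\<circ>) ys id"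
  by (induction xs) auto

lemma comp_list_snoc: "foldr (\<circ>) (xs @ [x]) id = foldr (\<circ>) xs id \<circ> x"
  by (induction xs) auto

lemma comp_list_commute:
  "(\<forall>g\<in>set gs. f \<circ> g = g \<circ> f) \<Longrightarrow> f \<circ> foldr (\<circ>) gs id = foldr (\<circ>) gs id \<circ> f"
  by (induction gs) (auto simp: fun_eq_iff)

lemma comp_lists_commute: "(\<forall>f\<in>set fs. \<forall>g\<in>set gs. f \<circ> g = g \<circ> f) \<Longrightarrow>
   foldr (\<circ>) fs id \<circ> foldr (\<circ>) gs id = foldr (\<circ>) gs id \<circ> foldr (\<circ>) fs id"
proof (induction fs)
  case (Cons f fs)
  let ?F = "foldr (\<circ>) fs id" and ?G = "foldr (\<circ>) gs id"
  have "\<forall>g\<in>set gs. f \<circ> g = g \<circ> f" using Cons.prems by (meson list.set_intros(1))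
  then have f: "f \<circ> ?G = ?G \<circ> f" by (rule comp_list_commute)
  have fs: "?F \<circ> ?G = ?G \<circ> ?F" using Cons by (meson list.set_intros(2))
  have "(f \<circ> ?F) \<circ> ?G = f \<circ> (?G \<circ> ?F)" by (simp only: comp_assoc fs)
  also have "\<dots> = ?G \<circ> (f \<circ> ?F)" by (simp only: comp_assoc[symmetric] f)
  finally have "(f \<circ> ?F) \<circ> ?G = ?G \<circ> (f \<circ> ?F)" .
  moreover have "foldr (\<circ>) (f # fs) id = f \<circ> ?F" by simp
  ultimately show ?case by (simp only:)
qed simp

lemma comp_list_fix: "(\<forall>f\<in>set fs. f z = z) \<Longrightarrow> foldr (\<circ>) fs id z = z"
  by (induction fs) auto

section \<open>The weight grading of V\<close>

definition weight :: "bool list \<Rightarrow> nat" where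
  "weight s = card {k. k < length s \<and> \<not> s ! k}"

definition homog :: "nat \<Rightarrow> nat \<Rightarrow> 'a::zero vec \<Rightarrow> bool" where
  "homog d m w \<longleftrightarrow> (\<forall>s. w s \<noteq> 0 \<longrightarrow> s \<in> basisV d \<and> weight s = m)"

lemma weight_le_length: "weight s \<le> length s"
proof -
  have "card {k. k < length s \<and> \<not> s ! k} \<le> card {..<length s}" by (rule card_mono) auto
  then show ?thesis by (simp add: weight_def)
qed

lemma weight_set_False: assumes "k < length t" "t ! k" shows "weight (t[k := False]) = Suc (weight t)"
proof -
  have "{j. j < length (t[k := False]) \<and> \<not> t[k := False] ! j} = insert k {j. j < length t \<and> \<not> t ! j}"
    using assms by (auto simp: nth_list_update)
  moreover have "k \<notin> {j. j < length t \<and> \<not> t ! j}" using assms by auto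
  ultimately show ?thesis by (simp add: weight_def)
qed

lemma weight_set_True: assumes "k < length t" "\<not> t ! k" shows "Suc (weight (t[k := True])) = weight t"
proof -
  have "{j. j < length t \<and> \<not> t ! j} = insert k {j. j < length (t[k := True]) \<and> \<not> t[k := True] ! j}"
    using assms by (auto simp: nth_list_update)
  moreover have "k \<notin> {j. j < length (t[k := True]) \<and> \<not> t[k := True] ! j}" using assms by auto
  ultimately show ?thesis by (simp add: weight_def)
qed

lemma weight_0_iff: "s \<in> basisV d \<Longrightarrow> weight s = 0 \<longleftrightarrow> s = x0 d"
proof
  assume "s \<in> basisV d" "weight s = 0"
  then have "{k. k < length s \<and> \<not> s ! k} = {}" and "length s = d"
    by (auto simp: weight_def basisV_def)
  then show "s = x0 d" by (auto simp: x0_def intro!: nth_equalityI)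
qed (simp add: weight_def x0_def)

lemma x0_basis [simp]: "x0 d \<in> basisV d"
  by (simp add: x0_def basisV_def)

lemma homog_restrict: "homog d m w \<Longrightarrow> restrict_V d w = w"
  by (auto simp: homog_def restrict_V_def fun_eq_iff)

lemma homog_unit_vec: "t \<in> basisV d \<Longrightarrow> homog d (weight t) (unit_vec t)"
  by (auto simp: homog_def unit_vec_def)

lemma weight_x0 [simp]: "weight (x0 d) = 0"
  by (simp add: weight_def x0_def)

lemma homog_unit_x0: "homog d 0 (unit_vec (x0 d))"
  using homog_unit_vec[OF x0_basis, of d] by simp

lemma homog_scale: "homog d m (w :: 'a::comm_ring_1 vec) \<Longrightarrow> homog d m (\<lambda>s. c * w s)"
  unfolding homog_def by (metis mult_zero_right)

lemma homog_0_in_U0: assumes "homog d 0 w" shows "w = (\<lambda>s. w (x0 d) * unit_vec (x0 d) s)"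
proof (rule ext)
  fix s
  show "w s = w (x0 d) * unit_vec (x0 d) s"
  proof (cases "w s = 0")
    case False
    then have "s = x0 d" using assms weight_0_iff by (auto simp: homog_def)
    then show ?thesis by (simp add: unit_vec_def)
  qed (auto simp: unit_vec_def)
qed

definition raises_weight :: "nat \<Rightarrow> 'a::comm_ring_1 op \<Rightarrow> bool" where
  "raises_weight d M \<longleftrightarrow>
     (\<forall>s\<in>basisV d. \<forall>t\<in>basisV d. M s t \<noteq> 0 \<longrightarrow> weight s = Suc (weight t))"

definition lowers_weight :: "nat \<Rightarrow> 'a::comm_ring_1 op \<Rightarrow> bool" where
  "lowers_weight d M \<longleftrightarrow>
     (\<forall>s\<in>basisV d. \<forall>t\<in>basisV d. M s t \<noteq> 0 \<longrightarrow> Suc (weight s) = weight t)"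

definition diag_by_weight :: "nat \<Rightarrow> 'a::comm_ring_1 op \<Rightarrow> (nat \<Rightarrow> 'a) \<Rightarrow> bool" where
  "diag_by_weight d M h \<longleftrightarrow>
     (\<forall>s\<in>basisV d. \<forall>t\<in>basisV d. M s t = (if s = t then h (weight s) else 0))"

lemma op_apply_nonzero:
  assumes "op_apply d M w s \<noteq> 0"
  obtains t where "s \<in> basisV d" "t \<in> basisV d" "M s t \<noteq> 0" "w t \<noteq> 0"
proof -
  have s: "s \<in> basisV d" using assms by (auto simp: op_apply_def split: if_splits)
  then have "(\<Sum>t\<in>basisV d. M s t * w t) \<noteq> 0" using assms by (simp add: op_apply_def)
  then obtain t where "t \<in> basisV d" "M s t * w t \<noteq> 0"
    by (rule sum.not_neutral_contains_not_neutral)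
  with s that show ?thesis by (metis mult_zero_left mult_zero_right)
qed

lemma raises_homog:
  assumes "raises_weight d M" "homog d m w"
  shows "homog d (Suc m) (op_apply d M w)"
  unfolding homog_def
proof (intro allI impI)
  fix s assume "op_apply d M w s \<noteq> 0"
  then obtain t where "s \<in> basisV d" "t \<in> basisV d" "M s t \<noteq> 0" "w t \<noteq> 0"
    by (rule op_apply_nonzero)
  with assms show "s \<in> basisV d \<and> weight s = Suc m"
    by (auto simp: raises_weight_def homog_def)
qed

lemma lowers_homog_nonzero:
  assumes "lowers_weight d M" "homog d m w" "op_apply d M w s \<noteq> 0"
  shows "s \<in> basisV d \<and> Suc (weight s) = m"
proof -
  obtain t where "s \<in> basisV d" "t \<in> basisV d" "M s t \<noteq> 0" "w t \<noteq> 0"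
    using assms(3) by (rule op_apply_nonzero)
  with assms(1,2) show ?thesis by (auto simp: lowers_weight_def homog_def)
qed

lemma lowers_homog:
  assumes "lowers_weight d M" "homog d m w"
  shows "homog d (m - 1) (op_apply d M w)"
  using lowers_homog_nonzero[OF assms] by (fastforce simp: homog_def)

lemma lowers_kills_weight_0:
  assumes "lowers_weight d M" "homog d 0 w"
  shows "op_apply d M w = (\<lambda>s. 0)"
  using lowers_homog_nonzero[OF assms] by auto

lemma diag_by_weight_apply:
  assumes M: "diag_by_weight d M h" and w: "homog d m w"
  shows "op_apply d M w = (\<lambda>s. h m * w s)"
proof (rule ext)
  fix s
  show "op_apply d M w s = h m * w s"
  proof (cases "s \<in> basisV d")
    case True
    have "(\<Sum>t\<in>basisV d. M s t * w t) = (\<Sum>t\<in>basisV d. if s = t then h (weight s) * w t else 0)"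
      using M True by (intro sum.cong) (auto simp: diag_by_weight_def)
    also have "\<dots> = h m * w s"
      using True w by (cases "w s = 0") (auto simp: homog_def)
    finally show ?thesis using True by (simp add: op_apply_def)
  next
    case False
    then show ?thesis using w by (simp add: op_apply_def) (metis homog_def mult_zero_right)
  qed
qed

lemma raises_lin_comb:
  "raises_weight d M \<Longrightarrow> raises_weight d N \<Longrightarrow>
   raises_weight d (op_add (op_smult a M) (op_smult b N))"
  unfolding raises_weight_def op_add_def op_smult_def by (metis add.right_neutral mult_zero_right)

lemma lowers_lin_comb:
  "lowers_weight d M \<Longrightarrow> lowers_weight d N \<Longrightarrow>
   lowers_weight d (op_add (op_smult a M) (op_smult b N))"
  unfolding lowers_weight_def op_add_def op_smult_def by (metis add.right_neutral mult_zero_right)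

lemma mul_diag_support:
  assumes "s \<in> basisV d" "t \<in> basisV d" "op_mul d M D s t \<noteq> 0" "diag_by_weight d D h"
  shows "M s t \<noteq> 0"
proof -
  obtain u where u: "u \<in> basisV d" "M s u * D u t \<noteq> 0"
    using assms(3) unfolding op_mul_def by (rule sum.not_neutral_contains_not_neutral)
  then have "u = t" using assms(2,4) by (auto simp: diag_by_weight_def split: if_splits)
  with u show ?thesis by auto
qed

lemma raises_mul_diag:
  "raises_weight d M \<Longrightarrow> diag_by_weight d D h \<Longrightarrow> raises_weight d (op_mul d M D)"
  using mul_diag_support unfolding raises_weight_def by blast

lemma lowers_mul_diag:
  "lowers_weight d M \<Longrightarrow> diag_by_weight d D h \<Longrightarrow> lowers_weight d (op_mul d M D)"
  using mul_diag_support unfolding lowers_weight_def by blast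

lemma tens_nonzero_factor:
  "tens d f s t \<noteq> 0 \<Longrightarrow> j < d \<Longrightarrow> f j (s ! j) (t ! j) \<noteq> 0"
  unfolding tens_def by (metis finite_lessThan lessThan_iff prod_zero)

lemma tens_diag:
  assumes s: "s \<in> basisV d" and t: "t \<in> basisV d" and "s \<noteq> t"
    and diag: "\<And>j r c. j < d \<Longrightarrow> f j r c \<noteq> 0 \<Longrightarrow> r = c"
  shows "tens d f s t = 0"
proof (rule ccontr)
  assume nz: "tens d f s t \<noteq> 0"
  have "s = t"
  proof (rule nth_equalityI)
    show "length s = length t" using s t by (simp add: basisV_def)
    fix j assume "j < length s"
    then have "j < d" using s by (simp add: basisV_def)
    then show "s ! j = t ! j" using diag tens_nonzero_factor[OF nz] by simp
  qed
  with \<open>s \<noteq> t\<close> show False by simp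
qed

lemma sum_tens_single_site:
  assumes s: "s \<in> basisV d" and t: "t \<in> basisV d" and nz: "(\<Sum>k<d. tens d (g k) s t) \<noteq> 0"
    and diag: "\<And>k j r c. k < d \<Longrightarrow> j < d \<Longrightarrow> j \<noteq> k \<Longrightarrow> g k j r c \<noteq> 0 \<Longrightarrow> r = c"
    and site: "\<And>k r c. k < d \<Longrightarrow> g k k r c \<noteq> 0 \<Longrightarrow> r = r0 \<and> c = c0"
  obtains k where "k < d" "s = t[k := r0]" "t ! k = c0"
proof -
  obtain k where k: "k < d" and nzk: "tens d (g k) s t \<noteq> 0"
    using sum.not_neutral_contains_not_neutral[OF nz] by blast
  have fk: "s ! k = r0 \<and> t ! k = c0" using site[OF k] tens_nonzero_factor[OF nzk k] by blast
  have "s = t[k := r0]"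
  proof (rule nth_equalityI)
    show "length s = length (t[k := r0])" using s t by (simp add: basisV_def)
    fix j assume "j < length s"
    then have "j < d" using s by (simp add: basisV_def)
    then show "s ! j = t[k := r0] ! j"
      using fk diag[OF k] tens_nonzero_factor[OF nzk] t by (cases "j = k") (auto simp: basisV_def)
  qed
  then show ?thesis using fk by (intro that[OF k]) simp_all
qed

lemma sum_tens_raises:
  assumes diag: "\<And>k j r c. k < d \<Longrightarrow> j < d \<Longrightarrow> j \<noteq> k \<Longrightarrow> g k j r c \<noteq> 0 \<Longrightarrow> r = c"
    and site: "\<And>k r c. k < d \<Longrightarrow> g k k r c \<noteq> 0 \<Longrightarrow> r = False \<and> c = True"
  shows "raises_weight d (\<lambda>s t. \<Sum>k<d. tens d (g k) s t)"
  unfolding raises_weight_def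
proof (intro ballI impI)
  fix s t assume s: "s \<in> basisV d" and t: "t \<in> basisV d" and nz: "(\<Sum>k<d. tens d (g k) s t) \<noteq> 0"
  obtain k where "k < d" "s = t[k := False]" "t ! k = True"
    by (rule sum_tens_single_site[OF s t nz diag site])
  then show "weight s = Suc (weight t)"
    using weight_set_False[of k t] t by (auto simp: basisV_def)
qed

lemma sum_tens_lowers:
  assumes diag: "\<And>k j r c. k < d \<Longrightarrow> j < d \<Longrightarrow> j \<noteq> k \<Longrightarrow> g k j r c \<noteq> 0 \<Longrightarrow> r = c"
    and site: "\<And>k r c. k < d \<Longrightarrow> g k k r c \<noteq> 0 \<Longrightarrow> r = True \<and> c = False"
  shows "lowers_weight d (\<lambda>s t. \<Sum>k<d. tens d (g k) s t)"
  unfolding lowers_weight_def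
proof (intro ballI impI)
  fix s t assume s: "s \<in> basisV d" and t: "t \<in> basisV d" and nz: "(\<Sum>k<d. tens d (g k) s t) \<noteq> 0"
  obtain k where "k < d" "s = t[k := True]" "t ! k = False"
    by (rule sum_tens_single_site[OF s t nz diag site])
  then show "Suc (weight s) = weight t"
    using weight_set_True[of k t] t by (auto simp: basisV_def)
qed

text \<open>The summands of e0^+ and e1^- move x to y at one site, those of e1^+ and e0^- move y to x.\<close>
lemma e0p_raises: "raises_weight d (V_e0p d q \<alpha>)"
  unfolding V_e0p_def
  by (rule sum_tens_raises) (auto simp: site_id_def site_K0_def site_e0p_def split: if_splits)

lemma e1m_raises: "raises_weight d (V_e1m d q)"
  unfolding V_e1m_def
  by (rule sum_tens_raises) (auto simp: site_id_def site_K1inv_def site_e1m_def split: if_splits)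

lemma e1p_lowers: "lowers_weight d (V_e1p d q)"
  unfolding V_e1p_def
  by (rule sum_tens_lowers) (auto simp: site_id_def site_K1_def site_e1p_def split: if_splits)

lemma e0m_lowers: "lowers_weight d (V_e0m d q \<alpha>)"
  unfolding V_e0m_def
  by (rule sum_tens_lowers) (auto simp: site_id_def site_K0inv_def site_e0m_def split: if_splits)

lemma prod_sites: "(\<Prod>k<length s. if s ! k then x else y) = x ^ (length s - weight s) * (y::'a::comm_ring_1) ^ weight s"
proof -
  let ?Y = "{k. k < length s \<and> \<not> s ! k}"
  have "{..<length s} \<inter> {k. s ! k} = {..<length s} - ?Y" and "{..<length s} \<inter> - {k. s ! k} = ?Y"
    by auto
  moreover have "card ({..<length s} - ?Y) = length s - weight s"
    by (subst card_Diff_subset) (auto simp: weight_def)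
  ultimately show ?thesis by (simp add: prod.If_cases weight_def)
qed

lemma powi_as_powers:
  assumes "(q::'a::field) \<noteq> 0" "n \<le> d"
  shows "q powi (2 * int n - int d) = q ^ n * inverse q ^ (d - n)"
    and "q powi (int d - 2 * int n) = q ^ (d - n) * inverse q ^ n"
proof -
  have split: "q powi (int k + - int j) = q ^ k * inverse q ^ j" for k j
    using power_int_add[of q "int k" "- int j"] assms(1) by (simp add: power_int_minus power_inverse)
  show "q powi (2 * int n - int d) = q ^ n * inverse q ^ (d - n)"
    using split[of n "d - n"] assms(2) by (simp add: of_nat_diff)
  show "q powi (int d - 2 * int n) = q ^ (d - n) * inverse q ^ n"
    using split[of "d - n" n] assms(2) by (simp add: of_nat_diff)
qed

lemma K0_diag: assumes "(q::'a::field) \<noteq> 0"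
  shows "diag_by_weight d (V_K0 d q) (\<lambda>n. q powi (2 * int n - int d))"
  unfolding diag_by_weight_def
proof (intro ballI)
  fix s t assume s: "s \<in> basisV d" and t: "t \<in> basisV d"
  have l: "length s = d" using s by (simp add: basisV_def)
  have "V_K0 d q s s = (\<Prod>k<length s. if s ! k then inverse q else q)"
    by (simp add: V_K0_def tens_def site_K0_def l)
  also have "\<dots> = q powi (2 * int (weight s) - int d)"
    unfolding prod_sites using powi_as_powers[OF assms, of "weight s" d] weight_le_length[of s] l
    by (simp add: mult.commute)
  finally show "V_K0 d q s t = (if s = t then q powi (2 * int (weight s) - int d) else 0)"
    using s t unfolding V_K0_def by (auto intro!: tens_diag simp: site_K0_def split: if_splits)
qed

lemma K1_diag: assumes "(q::'a::field) \<noteq> 0"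
  shows "diag_by_weight d (V_K1 d q) (\<lambda>n. q powi (int d - 2 * int n))"
  unfolding diag_by_weight_def
proof (intro ballI)
  fix s t assume s: "s \<in> basisV d" and t: "t \<in> basisV d"
  have l: "length s = d" using s by (simp add: basisV_def)
  have "V_K1 d q s s = (\<Prod>k<length s. if s ! k then q else inverse q)"
    by (simp add: V_K1_def tens_def site_K1_def l)
  also have "\<dots> = q powi (int d - 2 * int (weight s))"
    unfolding prod_sites using powi_as_powers[OF assms, of "weight s" d] weight_le_length[of s] l
    by simp
  finally show "V_K1 d q s t = (if s = t then q powi (int d - 2 * int (weight s)) else 0)"
    using s t unfolding V_K1_def by (auto intro!: tens_diag simp: site_K1_def split: if_splits)
qed

lemma R_raises: "(q::'a::field) \<noteq> 0 \<Longrightarrow> raises_weight d (R_op d q \<alpha> u v)"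
  unfolding R_op_def
  by (intro raises_lin_comb e0p_raises raises_mul_diag[OF e1m_raises K1_diag])

lemma L_lowers: "(q::'a::field) \<noteq> 0 \<Longrightarrow> lowers_weight d (L_op d q \<alpha> us vs)"
  unfolding L_op_def
  by (intro lowers_lin_comb e1p_lowers lowers_mul_diag[OF e0m_lowers K0_diag])

context
  fixes d :: nat and q :: "'a::field" and \<alpha> :: "nat \<Rightarrow> 'a"
  assumes q: "q \<noteq> 0"
begin

lemma Rpow_homog: "homog d m w \<Longrightarrow> homog d (m + n) ((op_apply d (R_op d q \<alpha> u v) ^^ n) w)"
  by (induction n) (simp_all add: raises_homog[OF R_raises[OF q]])

lemma Lpow_homog: "homog d m w \<Longrightarrow> homog d (m - n) ((op_apply d (L_op d q \<alpha> us vs) ^^ n) w)"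
proof (induction n)
  case (Suc n)
  then have "homog d (m - n) ((op_apply d (L_op d q \<alpha> us vs) ^^ n) w)" by simp
  then have "homog d (m - n - 1) (op_apply d (L_op d q \<alpha> us vs) ((op_apply d (L_op d q \<alpha> us vs) ^^ n) w))"
    by (rule lowers_homog[OF L_lowers[OF q]])
  then show ?case by simp
qed simp

lemma LR_weight_0: "homog d 0 w \<Longrightarrow>
  homog d 0 ((op_apply d (L_op d q \<alpha> us vs) ^^ i) ((op_apply d (R_op d q \<alpha> u v) ^^ i) w))"
  using Lpow_homog[OF Rpow_homog, of 0 w i i] by simp

lemma A_apply_homog: "homog d m w \<Longrightarrow> op_apply d (A_op d q \<alpha> a b c u v) w
   = (\<lambda>s. theta a b c q d m * w s + op_apply d (R_op d q \<alpha> u v) w s)"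
  unfolding A_op_def op_apply_add op_apply_smult op_apply_id
  by (simp add: homog_restrict diag_by_weight_apply[OF K0_diag[OF q]]
      diag_by_weight_apply[OF K1_diag[OF q]] theta_def algebra_simps)

lemma As_apply_homog: "homog d m w \<Longrightarrow> op_apply d (As_op d q \<alpha> as bs cs us vs) w
   = (\<lambda>s. theta as bs cs q d m * w s + op_apply d (L_op d q \<alpha> us vs) w s)"
  unfolding As_op_def op_apply_add op_apply_smult op_apply_id
  by (simp add: homog_restrict diag_by_weight_apply[OF K0_diag[OF q]]
      diag_by_weight_apply[OF K1_diag[OF q]] theta_def algebra_simps)

lemma factor_A_homog: "homog d m w \<Longrightarrow> factor d (A_op d q \<alpha> a b c u v) cf th w
   = (\<lambda>s. cf * ((theta a b c q d m - th) * w s + op_apply d (R_op d q \<alpha> u v) w s))"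
  unfolding factor_def by (simp add: homog_restrict A_apply_homog algebra_simps)

lemma factor_As_homog: "homog d m w \<Longrightarrow> factor d (As_op d q \<alpha> as bs cs us vs) cf th w
   = (\<lambda>s. cf * ((theta as bs cs q d m - th) * w s + op_apply d (L_op d q \<alpha> us vs) w s))"
  unfolding factor_def by (simp add: homog_restrict As_apply_homog algebra_simps)

text \<open>(A - theta_0) ... (A - theta_(i-1)) maps a weight-0 vector w to R^i w: the factor
  A - theta_h sends R^h w, of weight h, to R^(h+1) w.\<close>
lemma tau_factors_weight_0:
  assumes w: "homog d 0 w"
  shows "foldr (\<circ>) (map (\<lambda>h. factor d (A_op d q \<alpha> a b c u v) 1 (theta a b c q d h)) [0..<i]) id w
       = (op_apply d (R_op d q \<alpha> u v) ^^ i) w"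
proof (induction i)
  case (Suc i)
  let ?g = "\<lambda>h. factor d (A_op d q \<alpha> a b c u v) 1 (theta a b c q d h)"
  have "foldr (\<circ>) (map ?g [0..<Suc i]) id = foldr (\<circ>) (map ?g [0..<i]) id \<circ> ?g i"
    by (simp only: upt_Suc_append[OF le0] map_append list.map comp_list_snoc)
  also have "\<dots> = ?g i \<circ> foldr (\<circ>) (map ?g [0..<i]) id"
    by (rule comp_list_commute[symmetric]) (auto simp: factor_commute)
  finally have "foldr (\<circ>) (map ?g [0..<Suc i]) id = ?g i \<circ> foldr (\<circ>) (map ?g [0..<i]) id" .
  then have "foldr (\<circ>) (map ?g [0..<Suc i]) id w = ?g i ((op_apply d (R_op d q \<alpha> u v) ^^ i) w)"
    by (simp only: comp_apply Suc.IH)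
  also have "\<dots> = (op_apply d (R_op d q \<alpha> u v) ^^ Suc i) w"
    using Rpow_homog[OF w, where n = i and u = u and v = v] by (simp add: factor_A_homog)
  finally show ?case .
qed simp

lemma tau_apply_weight_0:
  assumes w: "homog d 0 w"
  shows "op_apply d (tau_op d (theta a b c q d) (A_op d q \<alpha> a b c u v) i) w
       = (op_apply d (R_op d q \<alpha> u v) ^^ i) w"
  unfolding tau_op_def op_apply_prod homog_restrict[OF w]
  using tau_factors_weight_0[OF w] by (simp add: op_apply_factor1 comp_def)

text \<open>The factors c_j (A* - theta*_j), j = m, m-1, ..., 1, applied to a weight-m vector
  produce c_1 ... c_m L^m w, since each factor kills the theta*-part at the current weight.\<close>
lemma As_factors_lower:
  "homog d m w \<Longrightarrow>
   foldr (\<circ>) (map (\<lambda>j. factor d (As_op d q \<alpha> as bs cs us vs) (cf j) (theta as bs cs q d j)) [1..<m+1]) id w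
     = (\<lambda>s. (\<Prod>j\<in>{1..m}. cf j) * (op_apply d (L_op d q \<alpha> us vs) ^^ m) w s)"
proof (induction m arbitrary: w)
  case (Suc m)
  let ?L = "op_apply d (L_op d q \<alpha> us vs)"
  let ?f = "\<lambda>j. factor d (As_op d q \<alpha> as bs cs us vs) (cf j) (theta as bs cs q d j)"
  have last: "?f (Suc m) w = (\<lambda>s. cf (Suc m) * ?L w s)"
    using factor_As_homog[OF Suc.prems] by simp
  have "homog d m (\<lambda>s. cf (Suc m) * ?L w s)"
    using homog_scale[OF lowers_homog[OF L_lowers[OF q] Suc.prems]] by simp
  note IH = Suc.IH[OF this]
  have "[1..<Suc m + 1] = [1..<m+1] @ [Suc m]" by simp
  then have "foldr (\<circ>) (map ?f [1..<Suc m + 1]) id w = foldr (\<circ>) (map ?f [1..<m+1]) id (?f (Suc m) w)"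
    by (simp only: map_append list.map comp_list_snoc comp_apply)
  also have "\<dots> = (\<lambda>s. (\<Prod>j\<in>{1..Suc m}. cf j) * (?L ^^ Suc m) w s)"
    unfolding last IH by (simp add: op_apply_pow_scale funpow_swap1 prod.cl_ivl_Suc mult.assoc)
  finally show ?case .
qed simp

text \<open>On U_0 the normalized factor (A* - theta*_j)/(theta*_0 - theta*_j) is the identity,
  since L annihilates U_0.\<close>
lemma As_factors_fix_weight_0:
  assumes z: "homog d 0 z" and cf: "\<forall>j\<in>set js. cf j * (theta as bs cs q d 0 - theta as bs cs q d j) = 1"
  shows "foldr (\<circ>) (map (\<lambda>j. factor d (As_op d q \<alpha> as bs cs us vs) (cf j) (theta as bs cs q d j)) js) id z = z"
proof (rule comp_list_fix, intro ballI)
  fix f assume "f \<in> set (map (\<lambda>j. factor d (As_op d q \<alpha> as bs cs us vs) (cf j) (theta as bs cs q d j)) js)"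
  then obtain j where "j \<in> set js" "f = factor d (As_op d q \<alpha> as bs cs us vs) (cf j) (theta as bs cs q d j)"
    by auto
  then show "f z = z"
    using cf z by (simp add: factor_As_homog lowers_kills_weight_0[OF L_lowers[OF q]]
        fun_eq_iff mult.assoc[symmetric])
qed

lemma E0s_apply_homog:
  assumes w: "homog d m w" and m: "m \<le> d"
    and inj: "inj_on (theta as bs cs q d) {0..d}"
  shows "op_apply d (E0s_op d q \<alpha> as bs cs us vs) w
     = (\<lambda>s. (\<Prod>j\<in>{1..m}. inverse (theta as bs cs q d 0 - theta as bs cs q d j))
            * (op_apply d (L_op d q \<alpha> us vs) ^^ m) w s)"
proof -
  let ?th = "theta as bs cs q d"
  let ?cf = "\<lambda>j. inverse (?th 0 - ?th j)"
  let ?f = "\<lambda>j. factor d (As_op d q \<alpha> as bs cs us vs) (?cf j) (?th j)"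
  let ?low = "\<lambda>s. (\<Prod>j\<in>{1..m}. ?cf j) * (op_apply d (L_op d q \<alpha> us vs) ^^ m) w s"
  have "op_apply d (E0s_op d q \<alpha> as bs cs us vs) w = foldr (\<circ>) (map ?f [1..<d+1]) id w"
    unfolding E0s_op_def op_apply_prod homog_restrict[OF w] by (simp add: op_apply_factor comp_def)
  also have "[1..<d+1] = [1..<m+1] @ [m+1..<d+1]"
    using upt_add_eq_append[of 1 "m+1" "d - m"] m by simp
  also have "foldr (\<circ>) (map ?f ([1..<m+1] @ [m+1..<d+1])) id
     = foldr (\<circ>) (map ?f [m+1..<d+1]) id \<circ> foldr (\<circ>) (map ?f [1..<m+1]) id"
    unfolding map_append comp_list_append by (rule comp_lists_commute) (auto simp: factor_commute)
  also have "(foldr (\<circ>) (map ?f [m+1..<d+1]) id \<circ> foldr (\<circ>) (map ?f [1..<m+1]) id) w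
     = foldr (\<circ>) (map ?f [m+1..<d+1]) id ?low"
    using As_factors_lower[OF w, where cf = ?cf] by simp
  also have "\<dots> = ?low"
  proof (rule As_factors_fix_weight_0)
    show "homog d 0 ?low" using homog_scale[OF Lpow_homog[OF w, of m]] by simp
    have "?th 0 \<noteq> ?th j" if "j \<in> {1..d}" for j
      using inj_onD[OF inj, of 0 j] that by auto
    then show "\<forall>j\<in>set [m+1..<d+1]. ?cf j * (?th 0 - ?th j) = 1" by auto
  qed
  finally show ?thesis .
qed

end

lemma zeta_eq:
  assumes q: "q \<noteq> 0"
  shows "zeta d q \<alpha> u v us vs i = (op_apply d (L_op d q \<alpha> us vs) ^^ i)
            ((op_apply d (R_op d q \<alpha> u v) ^^ i) (unit_vec (x0 d))) (x0 d)"
proof -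
  let ?e = "unit_vec (x0 d) :: 'a vec"
  let ?LR = "op_mul d (op_pow d (L_op d q \<alpha> us vs) i) (op_pow d (R_op d q \<alpha> u v) i)"
  define W where "W = (op_apply d (L_op d q \<alpha> us vs) ^^ i) ((op_apply d (R_op d q \<alpha> u v) ^^ i) ?e)"
  have Ri: "homog d i ((op_apply d (R_op d q \<alpha> u v) ^^ i) ?e)"
    using Rpow_homog[OF q homog_unit_x0] by simp
  have "homog d 0 W" unfolding W_def by (rule LR_weight_0[OF q homog_unit_x0])
  then have W: "W s = W (x0 d) * unit_vec (x0 d) s" for s
    by (rule fun_cong[OF homog_0_in_U0])
  have entry: "?LR s (x0 d) = W s" if "s \<in> basisV d" for s
    using op_entry[OF that x0_basis, of ?LR]
    by (simp add: op_apply_mul op_apply_pow homog_restrict[OF homog_unit_x0] homog_restrict[OF Ri] W_def)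
  have "\<forall>s\<in>basisV d. ?LR s (x0 d) = (if s = x0 d then W (x0 d) else 0)"
  proof
    fix s assume "s \<in> basisV d"
    then show "?LR s (x0 d) = (if s = x0 d then W (x0 d) else 0)"
      using entry W[of s] by (simp add: unit_vec_def)
  qed
  then have "zeta d q \<alpha> u v us vs i = W (x0 d)"
    unfolding zeta_def by (rule the_equality) (use entry in auto)
  then show ?thesis by (simp add: W_def)
qed

lemma E0s_into_U0:
  assumes q: "q \<noteq> 0" and w: "homog d m w" and m: "m \<le> d"
    and inj: "inj_on (theta as bs cs q d) {0..d}"
  shows "homog d 0 (op_apply d (E0s_op d q \<alpha> as bs cs us vs) w)"
proof -
  have "homog d (m - m) ((op_apply d (L_op d q \<alpha> us vs) ^^ m) w)"
    by (rule Lpow_homog[OF q w])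
  then show ?thesis
    using homog_scale E0s_apply_homog[OF q w m inj] by simp
qed

lemma E0s_tau_x0:
  assumes q: "q \<noteq> 0" and i: "i \<le> d"
    and inj: "inj_on (theta as bs cs q d) {0..d}"
  shows "op_apply d (E0s_op d q \<alpha> as bs cs us vs)
           (op_apply d (tau_op d (theta a b c q d) (A_op d q \<alpha> a b c u v) i) (unit_vec (x0 d)))
       = (\<lambda>s. (zeta d q \<alpha> u v us vs i / (\<Prod>h\<in>{1..i}. theta as bs cs q d 0 - theta as bs cs q d h))
              * unit_vec (x0 d) s)"
proof -
  let ?e = "unit_vec (x0 d) :: 'a vec"
  let ?W = "(op_apply d (L_op d q \<alpha> us vs) ^^ i) ((op_apply d (R_op d q \<alpha> u v) ^^ i) ?e)"
  have Ri: "homog d i ((op_apply d (R_op d q \<alpha> u v) ^^ i) ?e)"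
    using Rpow_homog[OF q homog_unit_x0] by simp
  have "homog d 0 ?W" by (rule LR_weight_0[OF q homog_unit_x0])
  then have W: "?W = (\<lambda>s. zeta d q \<alpha> u v us vs i * ?e s)"
    unfolding zeta_eq[OF q] by (rule homog_0_in_U0)
  have "(\<Prod>j\<in>{1..i}. inverse (theta as bs cs q d 0 - theta as bs cs q d j))
      = inverse (\<Prod>h\<in>{1..i}. theta as bs cs q d 0 - theta as bs cs q d h)"
    using prod_inversef[of "\<lambda>h. theta as bs cs q d 0 - theta as bs cs q d h" "{1..i}"] by (simp add: o_def)
  then show ?thesis
    unfolding tau_apply_weight_0[OF q homog_unit_x0] E0s_apply_homog[OF q Ri i inj] W
    by (simp add: divide_inverse mult_ac)
qed

theorem lemma9p10:
  fixes q a b c as bs cs u v us vs :: "'a::field" and \<alpha> :: "nat \<Rightarrow> 'a" and d i :: nat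
  assumes alg_closed: "\<forall>p :: 'a poly. degree p \<ge> 1 \<longrightarrow> (\<exists>x. poly p x = 0)"
    and "q \<noteq> 0" and "b \<noteq> 0" and "c \<noteq> 0" and "bs \<noteq> 0" and "cs \<noteq> 0"
    and "q^2 \<noteq> 1" and "q^2 \<noteq> -1"
    and "inj_on (theta a b c q d) {0..d}"
    and "inj_on (theta as bs cs q d) {0..d}"
    and "\<forall>k<d. \<alpha> k \<noteq> 0"
    and "u * vs = - b * bs * inverse q * (q - inverse q)^2"
    and "v * us = - c * cs * inverse q * (q - inverse q)^2"
    and "i \<le> d"
  shows "op_eq d
     (op_mul d (E0s_op d q \<alpha> as bs cs us vs)
        (op_mul d (tau_op d (theta a b c q d) (A_op d q \<alpha> a b c u v) i) (E0s_op d q \<alpha> as bs cs us vs)))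
     (op_smult (zeta d q \<alpha> u v us vs i /
                (\<Prod>h\<in>{1..i}. theta as bs cs q d 0 - theta as bs cs q d h))
        (E0s_op d q \<alpha> as bs cs us vs))"
proof -
  let ?E = "E0s_op d q \<alpha> as bs cs us vs"
  let ?T = "tau_op d (theta a b c q d) (A_op d q \<alpha> a b c u v) i"
  let ?z = "zeta d q \<alpha> u v us vs i / (\<Prod>h\<in>{1..i}. theta as bs cs q d 0 - theta as bs cs q d h)"
  have "op_mul d ?E (op_mul d ?T ?E) s t = ?z * ?E s t" if s: "s \<in> basisV d" and t: "t \<in> basisV d" for s t
  proof -
    \<comment> \<open>the column of E*_0 at t is a multiple of x tensor ... tensor x\<close>
    define c where "c = op_apply d ?E (unit_vec t) (x0 d)"
    have "weight t \<le> d" using weight_le_length[of t] t by (simp add: basisV_def)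
    then have col: "op_apply d ?E (unit_vec t) = (\<lambda>x. c * unit_vec (x0 d) x)"
      unfolding c_def by (rule homog_0_in_U0[OF E0s_into_U0[OF assms(2) homog_unit_vec[OF t] _ assms(10)]])
    have "op_mul d ?E (op_mul d ?T ?E) s t = op_apply d ?E (op_apply d ?T (op_apply d ?E (unit_vec t))) s"
      by (simp only: op_entry[OF s t, of "op_mul d ?E (op_mul d ?T ?E)"] op_apply_mul)
    also have "\<dots> = c * (?z * unit_vec (x0 d) s)"
      by (simp only: col op_apply_scale E0s_tau_x0[OF assms(2) assms(14) assms(10)])
    also have "\<dots> = ?z * ?E s t"
      using op_entry[OF s t, of ?E] col by simp
    finally show ?thesis .
  qed
  then show ?thesis by (simp add: op_eq_def op_smult_def)
qed

end
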